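(* Let $\rho\in(0,1)$ and let $(D_m)_{m\in\mathbb Z}$ be i.i.d. random variables with density $e^{-d}$ on $[0,\infty)$. For $j\ge1$ let $d_{i,i+j}=D_i+\dots+D_{i+j-1}$ and $d_{i,i-j}=D_{i-1}+\dots+D_{i-j}$, and let $$y_i=K\Big[1+\sum_{j=1}^\infty\rho^{d_{i,i+j}}+\sum_{j=1}^\infty\rho^{d_{i,i-j}}\Big],\qquad K=\frac{-\log\rho}{2-\log\rho}.$$ Then $E[y_i]=1$ and $\mathrm{Var}(y_i)=\frac{-\log\rho}{(2-\log\rho)^2}$. Moreover, with $u=\sum_{j=0}^\infty\rho^{d_{i,i+j}}$ (where $d_{i,i}=0$), $\mathrm{Var}(u)=-\frac{1}{2\log\rho}$.
   Context: $y_i$ is the exponentially weighted local average at sensor $i$ when all measurements equal $1$ and inter-sensor distances are independent exponential(1) random variables. *)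

theory Defs
  imports "HOL-Probability.Probability"
begin

definition dfwd :: "(int \<Rightarrow> 'a \<Rightarrow> real) \<Rightarrow> int \<Rightarrow> nat \<Rightarrow> 'a \<Rightarrow> real" where
  "dfwd D i j \<omega> = (\<Sum>m\<in>{i..<i + int j}. D m \<omega>)"

definition dbwd :: "(int \<Rightarrow> 'a \<Rightarrow> real) \<Rightarrow> int \<Rightarrow> nat \<Rightarrow> 'a \<Rightarrow> real" where
  "dbwd D i j \<omega> = (\<Sum>m\<in>{i - int j..<i}. D m \<omega>)"

end

theory Submission
  imports Defs
begin

text \<open>
  Put a = -ln \<rho> > 0, so \<rho>^x = exp(-a x). The Laplace transform of the exponential law
  gives E[\<rho>^(c D)] = 1/(1 + c a), and by independence E[\<rho>^(\<Sum> c_m D_m)] factorizes.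
  With q = 1/(1+a) and r = 1/(1+2a), the weights F_j = \<rho>^(d_{i,i+j}), G_j = \<rho>^(d_{i,i-j})
  therefore satisfy E[F_j F_k] = E[G_j G_k] = r^min(j,k) q^|j-k| (the first min(j,k) spacings
  occur twice) and E[F_j G_k] = q^j q^k (disjoint spacings). Summing by monotone convergence,
  u = \<Sum> F_j and v = \<Sum> G_j are a.s. finite and square-integrable with E[u] = E[v] = 1/(1-q),
  E[u^2] = E[v^2] = (1+q)/((1-q)(1-r)) and E[uv] = E[u] E[v]. Since y = K (u + v - 1) a.s.,
  the claims follow by algebra.
\<close>

lemma exponential_density_laplace:
  fixes l b :: real
  assumes l: "l > 0" and b: "b \<ge> 0"
  shows "(\<integral>\<^sup>+x. ennreal (exponential_density l x) * ennreal (exp (- b * x)) \<partial>lborel)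
       = ennreal (l / (l + b))"
proof -
  have lb: "l + b > 0" "l / (l + b) \<ge> 0"
    using l b by auto
  have tilt: "ennreal (exponential_density l x) * ennreal (exp (- b * x))
      = ennreal (l / (l + b)) * ennreal (exponential_density (l + b) x)" for x
  proof -
    have "exponential_density l x * exp (- b * x) = l / (l + b) * exponential_density (l + b) x"
      using l b by (auto simp: exponential_density_def exp_add[symmetric] field_simps)
    then show ?thesis
      using l lb by (metis ennreal_mult exponential_density_nonneg exp_ge_zero)
  qed
  have "prob_space (density lborel (exponential_density (l + b)))"
    using lb by (intro prob_space_exponential_density)
  then have total: "(\<integral>\<^sup>+x. ennreal (exponential_density (l + b) x) \<partial>lborel) = 1"
    using prob_space.emeasure_space_1 by (fastforce simp: emeasure_density)
  show ?thesis
    unfolding tilt by (simp add: nn_integral_cmult total)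
qed

lemma sum_geometric_convolution:
  fixes q r :: real
  assumes "q \<noteq> r"
  shows "(\<Sum>k<j. r ^ k * q ^ (j - k)) = q * (q ^ j - r ^ j) / (q - r)"
proof (induction j)
  case 0
  then show ?case by simp
next
  case (Suc j)
  have "(\<Sum>k<Suc j. r ^ k * q ^ (Suc j - k)) = q * (\<Sum>k<j. r ^ k * q ^ (j - k)) + r ^ j * q"
    by (simp add: sum_distrib_left Suc_diff_le mult_ac)
  also have "\<dots> = q * (q ^ Suc j - r ^ Suc j) / (q - r)"
    using assms unfolding Suc by (simp add: field_simps)
  finally show ?case .
qed

text \<open>The kernel r^min(j,k) q^|j-k|: with q = E[\<rho>^D] and r = E[\<rho>^(2D)] it is the
  mixed moment of two nested products of spacings of lengths j and k.\<close>
definition geo_kernel :: "real \<Rightarrow> real \<Rightarrow> nat \<Rightarrow> nat \<Rightarrow> real" where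
  "geo_kernel q r j k = r ^ min j k * q ^ (max j k - min j k)"

text \<open>Row sums of the kernel: the terms k \<ge> j form a geometric series, the terms k < j a
  geometric convolution.\<close>
lemma geo_kernel_row_sums:
  fixes q r :: real
  assumes q: "0 < q" "q < 1" and r: "0 < r" "r < q"
  shows "geo_kernel q r j sums (r ^ j / (1 - q) + q * (q ^ j - r ^ j) / (q - r))"
proof -
  have tail: "(\<lambda>k. geo_kernel q r j (k + j)) sums (r ^ j * (1 / (1 - q)))"
    unfolding geo_kernel_def using sums_mult[OF geometric_sums, of q "r ^ j"] q by simp
  have "(\<Sum>k<j. geo_kernel q r j k) = (\<Sum>k<j. r ^ k * q ^ (j - k))"
    by (intro sum.cong) (auto simp: geo_kernel_def)
  also have "\<dots> = q * (q ^ j - r ^ j) / (q - r)"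
    using r by (intro sum_geometric_convolution) simp
  finally show ?thesis
    using tail by (simp add: sums_iff_shift)
qed

text \<open>Total sum of the kernel, as an extended nonnegative real (the form in which it
  arises from monotone convergence).\<close>
lemma geo_kernel_double_sum:
  fixes q r :: real
  assumes q: "0 < q" "q < 1" and r: "0 < r" "r < q"
  shows "(\<Sum>j. \<Sum>k. ennreal (geo_kernel q r j k)) = ennreal ((1 + q) / ((1 - q) * (1 - r)))"
proof -
  define \<alpha> where "\<alpha> = q / (q - r)"
  define \<beta> where "\<beta> = 1 / (1 - q) - q / (q - r)"
  have nonneg: "geo_kernel q r j k \<ge> 0" for j k
    using q r by (simp add: geo_kernel_def)
  have ne: "q - r \<noteq> 0" "1 - q \<noteq> 0" "1 - r \<noteq> 0"
    using q r by auto
  have row: "r ^ j / (1 - q) + q * (q ^ j - r ^ j) / (q - r) = \<alpha> * q ^ j + \<beta> * r ^ j" for j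
    using ne by (simp add: \<alpha>_def \<beta>_def divide_simps) (simp add: algebra_simps)
  have row_sums: "geo_kernel q r j sums (\<alpha> * q ^ j + \<beta> * r ^ j)" for j
    using geo_kernel_row_sums[OF q r, of j] unfolding row .
  have row_nonneg: "\<alpha> * q ^ j + \<beta> * r ^ j \<ge> 0" for j
    by (rule sums_le[OF _ sums_zero row_sums]) (use nonneg in blast)
  have "(\<lambda>j. \<alpha> * q ^ j + \<beta> * r ^ j) sums (\<alpha> * (1 / (1 - q)) + \<beta> * (1 / (1 - r)))"
    using q r by (intro sums_add sums_mult geometric_sums) auto
  moreover have "\<alpha> * (1 / (1 - q)) + \<beta> * (1 / (1 - r)) = (1 + q) / ((1 - q) * (1 - r))"
    using ne by (simp add: \<alpha>_def \<beta>_def divide_simps) (simp add: algebra_simps)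
  ultimately have total: "(\<lambda>j. \<alpha> * q ^ j + \<beta> * r ^ j) sums ((1 + q) / ((1 - q) * (1 - r)))"
    by simp
  have "(\<Sum>k. ennreal (geo_kernel q r j k)) = ennreal (\<alpha> * q ^ j + \<beta> * r ^ j)" for j
    using suminf_ennreal2[OF nonneg sums_summable[OF row_sums]] sums_unique[OF row_sums[of j]]
    by simp
  then have "(\<Sum>j. \<Sum>k. ennreal (geo_kernel q r j k)) = (\<Sum>j. ennreal (\<alpha> * q ^ j + \<beta> * r ^ j))"
    by simp
  also have "\<dots> = ennreal ((1 + q) / ((1 - q) * (1 - r)))"
    using suminf_ennreal2[OF row_nonneg sums_summable[OF total]] sums_unique[OF total] by simp
  finally show ?thesis .
qed

lemma ennreal_geometric_sum:
  fixes q :: real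
  assumes "0 \<le> q" "q < 1"
  shows "(\<Sum>j. ennreal (q ^ j)) = ennreal (1 / (1 - q))"
  using assms by (simp add: suminf_ennreal2 summable_geometric suminf_geometric)

lemma nn_integral_series_product:
  fixes F G :: "nat \<Rightarrow> 'a \<Rightarrow> real"
  assumes [measurable]: "\<And>j. F j \<in> borel_measurable M" "\<And>j. G j \<in> borel_measurable M"
    and nonneg: "\<And>j \<omega>. F j \<omega> \<ge> 0" "\<And>j \<omega>. G j \<omega> \<ge> 0"
  shows "(\<integral>\<^sup>+\<omega>. (\<Sum>j. ennreal (F j \<omega>)) * (\<Sum>k. ennreal (G k \<omega>)) \<partial>M)
       = (\<Sum>j. \<Sum>k. \<integral>\<^sup>+\<omega>. ennreal (F j \<omega> * G k \<omega>) \<partial>M)"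
proof -
  have "(\<Sum>j. ennreal (F j \<omega>)) * (\<Sum>k. ennreal (G k \<omega>)) = (\<Sum>j. \<Sum>k. ennreal (F j \<omega> * G k \<omega>))"
    for \<omega>
    using nonneg by (simp add: ennreal_suminf_cmult ennreal_suminf_multc ennreal_mult)
  then show ?thesis
    by (simp add: nn_integral_suminf)
qed

lemma AE_series_converges:
  fixes F :: "nat \<Rightarrow> 'a \<Rightarrow> real"
  assumes [measurable]: "\<And>j. F j \<in> borel_measurable M" and nonneg: "\<And>j \<omega>. F j \<omega> \<ge> 0"
    and finite: "(\<integral>\<^sup>+\<omega>. (\<Sum>j. ennreal (F j \<omega>)) \<partial>M) \<noteq> \<infinity>"
  shows "AE \<omega> in M. summable (\<lambda>j. F j \<omega>) \<and> ennreal (\<Sum>j. F j \<omega>) = (\<Sum>j. ennreal (F j \<omega>))"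
proof -
  have "AE \<omega> in M. (\<Sum>j. ennreal (F j \<omega>)) \<noteq> \<infinity>"
    using finite by (intro nn_integral_PInf_AE) auto
  then show ?thesis
  proof eventually_elim
    case (elim \<omega>)
    then have "summable (\<lambda>j. F j \<omega>)"
      using nonneg by (intro summable_suminf_not_top) auto
    then show ?case
      using nonneg by (simp add: suminf_ennreal2)
  qed
qed

lemma has_bochner_integral_nonneg:
  fixes f :: "'a \<Rightarrow> real"
  assumes "f \<in> borel_measurable M" "AE \<omega> in M. f \<omega> \<ge> 0" "c \<ge> 0"
    and "(\<integral>\<^sup>+\<omega>. ennreal (f \<omega>) \<partial>M) = ennreal c"
  shows "has_bochner_integral M f c"
  using assms nn_integral_eq_integrable[of f M c] by (simp add: has_bochner_integral_iff)

lemma has_bochner_integral_series: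
  fixes F :: "nat \<Rightarrow> 'a \<Rightarrow> real"
  assumes [measurable]: "\<And>j. F j \<in> borel_measurable M" and nonneg: "\<And>j \<omega>. F j \<omega> \<ge> 0"
    and c: "c \<ge> 0" "(\<integral>\<^sup>+\<omega>. (\<Sum>j. ennreal (F j \<omega>)) \<partial>M) = ennreal c"
  shows "has_bochner_integral M (\<lambda>\<omega>. \<Sum>j. F j \<omega>) c"
proof (rule has_bochner_integral_nonneg)
  have AE: "AE \<omega> in M. summable (\<lambda>j. F j \<omega>) \<and> ennreal (\<Sum>j. F j \<omega>) = (\<Sum>j. ennreal (F j \<omega>))"
    using c by (intro AE_series_converges nonneg) auto
  then show "AE \<omega> in M. (\<Sum>j. F j \<omega>) \<ge> 0"
    by eventually_elim (use nonneg in \<open>auto intro!: suminf_nonneg\<close>)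
  show "(\<integral>\<^sup>+\<omega>. ennreal (\<Sum>j. F j \<omega>) \<partial>M) = ennreal c"
    unfolding c(2)[symmetric] using AE by (intro nn_integral_cong_AE) auto
qed (use c in auto)

lemma has_bochner_integral_series_product:
  fixes F G :: "nat \<Rightarrow> 'a \<Rightarrow> real"
  assumes [measurable]: "\<And>j. F j \<in> borel_measurable M" "\<And>j. G j \<in> borel_measurable M"
    and nonneg: "\<And>j \<omega>. F j \<omega> \<ge> 0" "\<And>j \<omega>. G j \<omega> \<ge> 0"
    and finite: "(\<integral>\<^sup>+\<omega>. (\<Sum>j. ennreal (F j \<omega>)) \<partial>M) \<noteq> \<infinity>"
      "(\<integral>\<^sup>+\<omega>. (\<Sum>j. ennreal (G j \<omega>)) \<partial>M) \<noteq> \<infinity>"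
    and c: "c \<ge> 0"
      "(\<integral>\<^sup>+\<omega>. (\<Sum>j. ennreal (F j \<omega>)) * (\<Sum>k. ennreal (G k \<omega>)) \<partial>M) = ennreal c"
  shows "has_bochner_integral M (\<lambda>\<omega>. (\<Sum>j. F j \<omega>) * (\<Sum>k. G k \<omega>)) c"
proof (rule has_bochner_integral_nonneg)
  have AE: "AE \<omega> in M. summable (\<lambda>j. F j \<omega>) \<and> ennreal (\<Sum>j. F j \<omega>) = (\<Sum>j. ennreal (F j \<omega>))
      \<and> summable (\<lambda>j. G j \<omega>) \<and> ennreal (\<Sum>j. G j \<omega>) = (\<Sum>j. ennreal (G j \<omega>))"
    using AE_series_converges[of F, OF _ nonneg(1) finite(1)]
      AE_series_converges[of G, OF _ nonneg(2) finite(2)] by auto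
  then show "AE \<omega> in M. (\<Sum>j. F j \<omega>) * (\<Sum>k. G k \<omega>) \<ge> 0"
    by eventually_elim (use nonneg in \<open>auto intro!: mult_nonneg_nonneg suminf_nonneg\<close>)
  show "(\<integral>\<^sup>+\<omega>. ennreal ((\<Sum>j. F j \<omega>) * (\<Sum>k. G k \<omega>)) \<partial>M) = ennreal c"
    unfolding c(2)[symmetric] using AE
    by (intro nn_integral_cong_AE) (auto simp: ennreal_mult nonneg suminf_nonneg)
qed (use c in auto)

lemma has_bochner_integral_AE_transfer:
  assumes "has_bochner_integral M f x" "g \<in> borel_measurable M" "AE \<omega> in M. f \<omega> = g \<omega>"
  shows "has_bochner_integral M g x"
  using assms has_bochner_integral_cong_AE borel_measurable_has_bochner_integral by metis

lemma (in prob_space) variance_from_moments: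
  fixes X :: "'a \<Rightarrow> real"
  assumes "has_bochner_integral M X e" "has_bochner_integral M (\<lambda>\<omega>. (X \<omega>)\<^sup>2) s"
  shows "variance X = s - e\<^sup>2"
  using assms by (subst variance_eq) (auto simp: has_bochner_integral_iff)

text \<open>We write a = -ln \<rho>, so that
  \<rho>^x = exp(-a x); q = E[\<rho>^D] and r = E[\<rho>^(2D)].\<close>
locale exponential_spacings = prob_space M for M :: "'a measure" +
  fixes D :: "int \<Rightarrow> 'a \<Rightarrow> real" and \<rho> :: real and i :: int
  assumes rho: "0 < \<rho>" "\<rho> < 1"
    and indep: "indep_vars (\<lambda>_. borel) D UNIV"
    and exponential: "\<And>m. distributed M lborel (D m) (exponential_density 1)"
begin

definition a :: real where "a = - ln \<rho>"
definition q :: real where "q = 1 / (1 + a)"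
definition r :: real where "r = 1 / (1 + 2 * a)"

lemma a_pos: "a > 0"
  using rho by (simp add: a_def)

lemma q_r_bounds: "0 < q" "q < 1" "0 < r" "r < q"
  using a_pos by (auto simp: q_def r_def field_simps)

lemma D_measurable [measurable]: "D m \<in> borel_measurable M"
  using distributed_measurable[OF exponential[of m]] by simp

text \<open>By independence, E[\<rho>^(\<Sum> c_m D_m)] factorizes into the Laplace transforms
  E[\<rho>^(c_m D_m)] = 1/(1 + c_m a).\<close>
lemma laplace_linear_combination:
  assumes I: "finite I" and c: "\<And>m. m \<in> I \<Longrightarrow> c m \<ge> 0"
  shows "(\<integral>\<^sup>+\<omega>. ennreal (\<rho> powr (\<Sum>m\<in>I. c m * D m \<omega>)) \<partial>M)
       = ennreal (\<Prod>m\<in>I. 1 / (1 + c m * a))"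
proof -
  have single: "(\<integral>\<^sup>+\<omega>. ennreal (\<rho> powr (c m * D m \<omega>)) \<partial>M) = ennreal (1 / (1 + c m * a))"
    if "m \<in> I" for m
  proof -
    have "\<rho> powr (c m * x) = exp (- (c m * a) * x)" for x
      using rho by (simp add: powr_def a_def)
    then have "(\<integral>\<^sup>+\<omega>. ennreal (\<rho> powr (c m * D m \<omega>)) \<partial>M)
      = (\<integral>\<^sup>+x. ennreal (exponential_density 1 x) * ennreal (exp (- (c m * a) * x)) \<partial>lborel)"
      by (subst distributed_nn_integral[OF exponential[of m]]) auto
    also have "\<dots> = ennreal (1 / (1 + c m * a))"
      using c[OF that] a_pos by (intro exponential_density_laplace) simp_all
    finally show ?thesis .
  qed
  have "(\<integral>\<^sup>+\<omega>. ennreal (\<rho> powr (\<Sum>m\<in>I. c m * D m \<omega>)) \<partial>M)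
      = (\<integral>\<^sup>+\<omega>. (\<Prod>m\<in>I. ennreal (\<rho> powr (c m * D m \<omega>))) \<partial>M)"
    using rho by (simp add: powr_sum prod_ennreal)
  also have "\<dots> = (\<Prod>m\<in>I. \<integral>\<^sup>+\<omega>. ennreal (\<rho> powr (c m * D m \<omega>)) \<partial>M)"
    by (intro indep_vars_nn_integral I indep_vars_compose2[OF indep_vars_subset[OF indep]]) auto
  also have "\<dots> = ennreal (\<Prod>m\<in>I. 1 / (1 + c m * a))"
    using c a_pos by (simp add: single prod_ennreal)
  finally show ?thesis .
qed

text \<open>Two nested blocks of spacings B \<subseteq> A: the spacings in B enter twice and contribute
  factor r each, the remaining ones factor q.\<close>
lemma laplace_nested_blocks:
  assumes A: "finite A" and B: "B \<subseteq> A"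
  shows "(\<integral>\<^sup>+\<omega>. ennreal (\<rho> powr (\<Sum>m\<in>B. D m \<omega>) * \<rho> powr (\<Sum>m\<in>A. D m \<omega>)) \<partial>M)
       = ennreal (r ^ card B * q ^ (card A - card B))"
proof -
  define c where "c m = (if m \<in> B then 2 else 1 :: real)" for m
  have combine: "\<rho> powr (\<Sum>m\<in>B. D m \<omega>) * \<rho> powr (\<Sum>m\<in>A. D m \<omega>) = \<rho> powr (\<Sum>m\<in>A. c m * D m \<omega>)"
    for \<omega>
  proof -
    have "(\<Sum>m\<in>A. c m * D m \<omega>) = (\<Sum>m\<in>A. (if m \<in> B then D m \<omega> else 0) + D m \<omega>)"
      by (intro sum.cong) (auto simp: c_def)
    also have "\<dots> = (\<Sum>m\<in>B. D m \<omega>) + (\<Sum>m\<in>A. D m \<omega>)"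
      using A B by (simp add: sum.distrib sum.inter_restrict[symmetric] Int_absorb1)
    finally show ?thesis
      by (simp add: powr_add)
  qed
  have "(\<Prod>m\<in>A. 1 / (1 + c m * a)) = (\<Prod>m\<in>A. if m \<in> B then r else q)"
    by (intro prod.cong) (auto simp: c_def q_def r_def)
  also have "\<dots> = r ^ card B * q ^ (card A - card B)"
    using A B by (simp add: prod.If_cases Int_absorb1 Diff_eq[symmetric] card_Diff_subset finite_subset)
  finally show ?thesis
    unfolding combine using A by (simp add: laplace_linear_combination c_def)
qed

lemma laplace_block:
  assumes "finite A"
  shows "(\<integral>\<^sup>+\<omega>. ennreal (\<rho> powr (\<Sum>m\<in>A. D m \<omega>)) \<partial>M) = ennreal (q ^ card A)"
  using laplace_nested_blocks[OF assms, of "{}"] rho by simp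

lemma nested_blocks_moment:
  assumes mono: "\<And>j k. j \<le> k \<Longrightarrow> I j \<subseteq> I k"
    and fin: "\<And>j. finite (I j)" and card: "\<And>j. card (I j) = j"
  shows "(\<integral>\<^sup>+\<omega>. ennreal (\<rho> powr (\<Sum>m\<in>I j. D m \<omega>) * \<rho> powr (\<Sum>m\<in>I k. D m \<omega>)) \<partial>M)
       = ennreal (geo_kernel q r j k)"
proof (cases "j \<le> k")
  case True
  then show ?thesis
    using laplace_nested_blocks[OF fin mono[OF True]] by (simp add: card geo_kernel_def)
next
  case False
  then show ?thesis
    using laplace_nested_blocks[OF fin mono[of k j]]
    by (simp add: card geo_kernel_def mult.commute)
qed

definition fwd :: "nat \<Rightarrow> 'a \<Rightarrow> real" where "fwd j \<omega> = \<rho> powr dfwd D i j \<omega>"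
definition bwd :: "nat \<Rightarrow> 'a \<Rightarrow> real" where "bwd j \<omega> = \<rho> powr dbwd D i j \<omega>"
definition fwd_sum :: "'a \<Rightarrow> real" where "fwd_sum \<omega> = (\<Sum>j. fwd j \<omega>)"
definition bwd_sum :: "'a \<Rightarrow> real" where "bwd_sum \<omega> = (\<Sum>j. bwd j \<omega>)"

lemma fwd_bwd_measurable [measurable]:
  "fwd j \<in> borel_measurable M" "bwd j \<in> borel_measurable M"
  unfolding fwd_def bwd_def dfwd_def dbwd_def by measurable

lemma fwd_bwd_nonneg: "fwd j \<omega> \<ge> 0" "bwd j \<omega> \<ge> 0"
  by (simp_all add: fwd_def bwd_def)

lemma fwd_bwd_zero: "fwd 0 \<omega> = 1" "bwd 0 \<omega> = 1"
  using rho by (simp_all add: fwd_def bwd_def dfwd_def dbwd_def)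

lemma fwd_moment: "(\<integral>\<^sup>+\<omega>. ennreal (fwd j \<omega> * fwd k \<omega>) \<partial>M) = ennreal (geo_kernel q r j k)"
  unfolding fwd_def dfwd_def by (rule nested_blocks_moment) auto

lemma bwd_moment: "(\<integral>\<^sup>+\<omega>. ennreal (bwd j \<omega> * bwd k \<omega>) \<partial>M) = ennreal (geo_kernel q r j k)"
  unfolding bwd_def dbwd_def by (rule nested_blocks_moment) auto

text \<open>Forward and backward weights involve disjoint spacings, so they are uncorrelated.\<close>
lemma fwd_bwd_moment: "(\<integral>\<^sup>+\<omega>. ennreal (fwd j \<omega> * bwd k \<omega>) \<partial>M) = ennreal (q ^ j * q ^ k)"
proof -
  have "fwd j \<omega> * bwd k \<omega> = \<rho> powr (\<Sum>m\<in>{i - int k..<i + int j}. D m \<omega>)" for \<omega>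
  proof -
    have "{i - int k..<i + int j} = {i..<i + int j} \<union> {i - int k..<i}"
      by auto
    then show ?thesis
      by (simp add: fwd_def bwd_def dfwd_def dbwd_def sum.union_disjoint powr_add)
  qed
  then show ?thesis
    using laplace_block[of "{i - int k..<i + int j}"] by (simp add: power_add flip: of_nat_add)
qed

text \<open>The values of E[u] = E[v] and of E[u^2] = E[v^2].\<close>
definition m1 :: real where "m1 = 1 / (1 - q)"
definition m2 :: real where "m2 = (1 + q) / ((1 - q) * (1 - r))"

lemma m1_m2_values: "m1 = (1 + a) / a" "m2 = m1\<^sup>2 + 1 / (2 * a)"
proof -
  have a: "a > 0" "1 + a \<noteq> 0" "1 + 2 * a \<noteq> 0" "a \<noteq> 0"
    using a_pos by auto
  have q: "1 - q = a / (1 + a)" "1 + q = (2 + a) / (1 + a)" and r: "1 - r = 2 * a / (1 + 2 * a)"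
    using a by (simp_all add: q_def r_def field_simps)
  show m1: "m1 = (1 + a) / a"
    unfolding m1_def q by simp
  have "m2 = ((2 + a) / (1 + a)) / ((a / (1 + a)) * (2 * a / (1 + 2 * a)))"
    unfolding m2_def q r ..
  also have "\<dots> = (2 + a) * (1 + 2 * a) / (2 * a\<^sup>2)"
    using a by (simp add: divide_simps power2_eq_square)
  also have "\<dots> = m1\<^sup>2 + 1 / (2 * a)"
    unfolding m1 using a by (simp add: divide_simps power2_eq_square) (simp add: algebra_simps)
  finally show "m2 = m1\<^sup>2 + 1 / (2 * a)" .
qed

lemma series_first_moments:
  "(\<integral>\<^sup>+\<omega>. (\<Sum>j. ennreal (fwd j \<omega>)) \<partial>M) = ennreal m1"
  "(\<integral>\<^sup>+\<omega>. (\<Sum>j. ennreal (bwd j \<omega>)) \<partial>M) = ennreal m1"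
proof -
  have "(\<integral>\<^sup>+\<omega>. ennreal (fwd j \<omega>) \<partial>M) = ennreal (q ^ j)"
    "(\<integral>\<^sup>+\<omega>. ennreal (bwd j \<omega>) \<partial>M) = ennreal (q ^ j)" for j
    using fwd_moment[of 0 j] bwd_moment[of 0 j] by (simp_all add: fwd_bwd_zero geo_kernel_def)
  then show "(\<integral>\<^sup>+\<omega>. (\<Sum>j. ennreal (fwd j \<omega>)) \<partial>M) = ennreal m1"
    "(\<integral>\<^sup>+\<omega>. (\<Sum>j. ennreal (bwd j \<omega>)) \<partial>M) = ennreal m1"
    using q_r_bounds by (simp_all add: nn_integral_suminf ennreal_geometric_sum suminf_geometric m1_def)
qed

lemma series_second_moments:
  "(\<integral>\<^sup>+\<omega>. (\<Sum>j. ennreal (fwd j \<omega>)) * (\<Sum>k. ennreal (fwd k \<omega>)) \<partial>M) = ennreal m2"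
  "(\<integral>\<^sup>+\<omega>. (\<Sum>j. ennreal (bwd j \<omega>)) * (\<Sum>k. ennreal (bwd k \<omega>)) \<partial>M) = ennreal m2"
  "(\<integral>\<^sup>+\<omega>. (\<Sum>j. ennreal (fwd j \<omega>)) * (\<Sum>k. ennreal (bwd k \<omega>)) \<partial>M) = ennreal (m1 * m1)"
proof -
  have product: "(\<integral>\<^sup>+\<omega>. (\<Sum>j. ennreal (F j \<omega>)) * (\<Sum>k. ennreal (G k \<omega>)) \<partial>M)
      = (\<Sum>j. \<Sum>k. \<integral>\<^sup>+\<omega>. ennreal (F j \<omega> * G k \<omega>) \<partial>M)"
    if "F \<in> {fwd, bwd}" "G \<in> {fwd, bwd}" for F G
    using that by (intro nn_integral_series_product) (auto simp: fwd_bwd_nonneg)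
  have kernel: "(\<Sum>j. \<Sum>k. ennreal (geo_kernel q r j k)) = ennreal m2"
    unfolding m2_def using q_r_bounds by (rule geo_kernel_double_sum)
  show "(\<integral>\<^sup>+\<omega>. (\<Sum>j. ennreal (fwd j \<omega>)) * (\<Sum>k. ennreal (fwd k \<omega>)) \<partial>M) = ennreal m2"
    using product[of fwd fwd] by (simp add: fwd_moment kernel)
  show "(\<integral>\<^sup>+\<omega>. (\<Sum>j. ennreal (bwd j \<omega>)) * (\<Sum>k. ennreal (bwd k \<omega>)) \<partial>M) = ennreal m2"
    using product[of bwd bwd] by (simp add: bwd_moment kernel)
  have geometric: "(\<Sum>j. ennreal (q ^ j)) = ennreal m1"
    unfolding m1_def using q_r_bounds by (intro ennreal_geometric_sum) auto
  have "(\<Sum>j. \<Sum>k. ennreal (q ^ j * q ^ k)) = (\<Sum>j. \<Sum>k. ennreal (q ^ j) * ennreal (q ^ k))"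
    using q_r_bounds by (intro suminf_cong ennreal_mult) auto
  also have "\<dots> = (\<Sum>j. ennreal (q ^ j)) * (\<Sum>k. ennreal (q ^ k))"
    by (simp only: ennreal_suminf_cmult ennreal_suminf_multc)
  also have "\<dots> = ennreal (m1 * m1)"
    unfolding geometric using q_r_bounds by (intro ennreal_mult[symmetric]) (simp_all add: m1_def)
  finally show "(\<integral>\<^sup>+\<omega>. (\<Sum>j. ennreal (fwd j \<omega>)) * (\<Sum>k. ennreal (bwd k \<omega>)) \<partial>M) = ennreal (m1 * m1)"
    using product[of fwd bwd] by (simp add: fwd_bwd_moment)
qed

lemma series_integrals:
  "has_bochner_integral M fwd_sum m1" "has_bochner_integral M bwd_sum m1"
  "has_bochner_integral M (\<lambda>\<omega>. fwd_sum \<omega> * fwd_sum \<omega>) m2"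
  "has_bochner_integral M (\<lambda>\<omega>. bwd_sum \<omega> * bwd_sum \<omega>) m2"
  "has_bochner_integral M (\<lambda>\<omega>. fwd_sum \<omega> * bwd_sum \<omega>) (m1 * m1)"
proof -
  have pos: "m1 \<ge> 0" "m2 \<ge> 0"
    using a_pos by (simp_all add: m1_m2_values)
  have finite: "(\<integral>\<^sup>+\<omega>. (\<Sum>j. ennreal (fwd j \<omega>)) \<partial>M) \<noteq> \<infinity>"
    "(\<integral>\<^sup>+\<omega>. (\<Sum>j. ennreal (bwd j \<omega>)) \<partial>M) \<noteq> \<infinity>"
    by (simp_all add: series_first_moments)
  show "has_bochner_integral M fwd_sum m1" "has_bochner_integral M bwd_sum m1"
    unfolding fwd_sum_def[abs_def] bwd_sum_def[abs_def] using pos(1)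
    by (auto intro!: has_bochner_integral_series fwd_bwd_nonneg series_first_moments)
  show "has_bochner_integral M (\<lambda>\<omega>. fwd_sum \<omega> * fwd_sum \<omega>) m2"
    "has_bochner_integral M (\<lambda>\<omega>. bwd_sum \<omega> * bwd_sum \<omega>) m2"
    "has_bochner_integral M (\<lambda>\<omega>. fwd_sum \<omega> * bwd_sum \<omega>) (m1 * m1)"
    unfolding fwd_sum_def bwd_sum_def using pos finite
    by (auto intro!: has_bochner_integral_series_product fwd_bwd_nonneg series_second_moments)
qed

lemma series_converge_AE: "AE \<omega> in M. summable (\<lambda>j. fwd j \<omega>) \<and> summable (\<lambda>j. bwd j \<omega>)"
proof -
  have "AE \<omega> in M. summable (\<lambda>j. fwd j \<omega>) \<and> ennreal (\<Sum>j. fwd j \<omega>) = (\<Sum>j. ennreal (fwd j \<omega>))"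
    "AE \<omega> in M. summable (\<lambda>j. bwd j \<omega>) \<and> ennreal (\<Sum>j. bwd j \<omega>) = (\<Sum>j. ennreal (bwd j \<omega>))"
    by (rule AE_series_converges; simp add: fwd_bwd_measurable fwd_bwd_nonneg series_first_moments)+
  then show ?thesis
    by eventually_elim simp
qed

text \<open>Splitting off the j = 0 terms, the local average K (1 + \<Sum>_{j\<ge>1} F_j + \<Sum>_{j\<ge>1} G_j)
  equals K (u + v - 1) almost surely.\<close>
lemma local_average_AE:
  "AE \<omega> in M. K * (fwd_sum \<omega> + bwd_sum \<omega> - 1)
     = K * (1 + (\<Sum>j. \<rho> powr dfwd D i (Suc j) \<omega>) + (\<Sum>j. \<rho> powr dbwd D i (Suc j) \<omega>))"
  using series_converge_AE
proof eventually_elim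
  case (elim \<omega>)
  then have tails: "(\<Sum>j. \<rho> powr dfwd D i (Suc j) \<omega>) = fwd_sum \<omega> - 1"
    "(\<Sum>j. \<rho> powr dbwd D i (Suc j) \<omega>) = bwd_sum \<omega> - 1"
    using suminf_split_head[of "\<lambda>j. fwd j \<omega>"] suminf_split_head[of "\<lambda>j. bwd j \<omega>"] fwd_bwd_zero
    by (simp_all add: fwd_sum_def bwd_sum_def fwd_def bwd_def)
  show ?case
    unfolding tails by (simp add: algebra_simps)
qed

lemma local_average_integrals:
  "has_bochner_integral M (\<lambda>\<omega>. K * (fwd_sum \<omega> + bwd_sum \<omega> - 1)) (K * (m1 + m1 - 1))"
  "has_bochner_integral M (\<lambda>\<omega>. (K * (fwd_sum \<omega> + bwd_sum \<omega> - 1))\<^sup>2)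
     (K\<^sup>2 * (m2 + m2 + 2 * (m1 * m1) - 2 * m1 - 2 * m1 + 1))"
proof -
  have const: "has_bochner_integral M (\<lambda>_. c) c" for c :: real
    by (simp add: has_bochner_integral_iff prob_space)
  have square: "(K * (u + v - 1))\<^sup>2 = K\<^sup>2 * (u * u + v * v + 2 * (u * v) - 2 * u - 2 * v + 1)"
    for u v :: real
    by (simp add: power2_eq_square algebra_simps)
  show "has_bochner_integral M (\<lambda>\<omega>. K * (fwd_sum \<omega> + bwd_sum \<omega> - 1)) (K * (m1 + m1 - 1))"
    "has_bochner_integral M (\<lambda>\<omega>. (K * (fwd_sum \<omega> + bwd_sum \<omega> - 1))\<^sup>2)
       (K\<^sup>2 * (m2 + m2 + 2 * (m1 * m1) - 2 * m1 - 2 * m1 + 1))"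
    unfolding square
    by (intro has_bochner_integral_mult_right has_bochner_integral_diff has_bochner_integral_add
        series_integrals const)+
qed

theorem local_average_moments:
  defines "K \<equiv> a / (2 + a)"
  defines "y \<equiv> \<lambda>\<omega>. K * (1 + (\<Sum>j. \<rho> powr dfwd D i (Suc j) \<omega>) + (\<Sum>j. \<rho> powr dbwd D i (Suc j) \<omega>))"
  shows "expectation y = 1" "variance y = a / (2 + a)\<^sup>2" "variance fwd_sum = 1 / (2 * a)"
proof -
  have [measurable]: "y \<in> borel_measurable M"
    unfolding y_def dfwd_def dbwd_def by measurable
  have y_AE: "AE \<omega> in M. K * (fwd_sum \<omega> + bwd_sum \<omega> - 1) = y \<omega>"
    unfolding y_def by (rule local_average_AE)
  have first: "has_bochner_integral M y (K * (m1 + m1 - 1))"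
    by (rule has_bochner_integral_AE_transfer[OF local_average_integrals(1) _ y_AE]) measurable
  have "AE \<omega> in M. (K * (fwd_sum \<omega> + bwd_sum \<omega> - 1))\<^sup>2 = (y \<omega>)\<^sup>2"
    using y_AE by eventually_elim simp
  then have second: "has_bochner_integral M (\<lambda>\<omega>. (y \<omega>)\<^sup>2)
      (K\<^sup>2 * (m2 + m2 + 2 * (m1 * m1) - 2 * m1 - 2 * m1 + 1))"
    by (rule has_bochner_integral_AE_transfer[OF local_average_integrals(2), rotated]) measurable
  have a: "a \<noteq> 0" "2 + a \<noteq> 0"
    using a_pos by auto
  have mean: "K * (m1 + m1 - 1) = 1"
    using a unfolding K_def m1_m2_values(1) by (simp add: divide_simps)
  show "expectation y = 1"
    using first mean by (simp add: has_bochner_integral_iff)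
  have "variance y = K\<^sup>2 * (m2 + m2 + 2 * (m1 * m1) - 2 * m1 - 2 * m1 + 1) - 1"
    using variance_from_moments[OF first second] mean by simp
  also have "\<dots> = (K * (m1 + m1 - 1))\<^sup>2 + K\<^sup>2 / a - 1"
    using a unfolding m1_m2_values(2) by (simp add: divide_simps power2_eq_square) (simp add: algebra_simps)
  also have "\<dots> = a / (2 + a)\<^sup>2"
    unfolding mean using a by (simp add: K_def power2_eq_square)
  finally show "variance y = a / (2 + a)\<^sup>2" .
  have "variance fwd_sum = m2 - m1\<^sup>2"
    using variance_from_moments[OF series_integrals(1)] series_integrals(3)
    by (simp add: power2_eq_square)
  then show "variance fwd_sum = 1 / (2 * a)"
    unfolding m1_m2_values(2) by simp
qed

end

theorem mainTheorem9:
  fixes M :: "'a measure" and D :: "int \<Rightarrow> 'a \<Rightarrow> real"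
    and \<rho> :: real and i :: int
  assumes "prob_space M"
    and "\<rho> > 0" and "\<rho> < 1"
    and "prob_space.indep_vars M (\<lambda>_. borel) D UNIV"
    and "\<And>m. distributed M lborel (D m) (exponential_density 1)"
  defines "K \<equiv> - ln \<rho> / (2 - ln \<rho>)"
  defines "y \<equiv> (\<lambda>\<omega>. K * (1 + (\<Sum>j. \<rho> powr dfwd D i (Suc j) \<omega>)
                            + (\<Sum>j. \<rho> powr dbwd D i (Suc j) \<omega>)))"
  defines "u \<equiv> (\<lambda>\<omega>. \<Sum>j. \<rho> powr dfwd D i j \<omega>)"
  shows "prob_space.expectation M y = 1
       \<and> prob_space.variance M y = - ln \<rho> / (2 - ln \<rho>)\<^sup>2
       \<and> prob_space.variance M u = - 1 / (2 * ln \<rho>)"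
proof -
  interpret exponential_spacings M D \<rho> i
    using assms(1-5) by (simp add: exponential_spacings_def exponential_spacings_axioms_def)
  have ln_rho: "ln \<rho> = - a"
    by (simp add: a_def)
  have K: "K = a / (2 + a)" and var_y: "- ln \<rho> / (2 - ln \<rho>)\<^sup>2 = a / (2 + a)\<^sup>2"
    and var_u: "- 1 / (2 * ln \<rho>) = 1 / (2 * a)"
    unfolding K_def ln_rho by simp_all
  have u: "u = fwd_sum"
    unfolding u_def by (rule ext) (simp add: fwd_sum_def fwd_def)
  show ?thesis
    unfolding y_def u K var_y var_u using local_average_moments by blast
qed

end
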